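(* Let $m\ge 2$ and $n\ge 2$, and let $G_n$ be the perfect $m$-caterpillar of length $n$. Then $BD(G_n)\simeq \Sigma_m(M_2(G_{n-1}))\vee \Sigma(BD(G_{n-1}))$.
   Context: A perfect $m$-caterpillar of length $n$, $G_n$, is the tree consisting of a central path on $n$ vertices together with $m$ leaves attached to each vertex of the central path; $G_{n-1}$ is obtained from $G_n$ by deleting an endpoint of the central path together with its $m$ leaves. Let $x_1$ be that endpoint of the central path of $G_n$. $BD(G_n)$ is the simplicial complex whose vertices are the edges of $G_n$ and whose faces are edge sets $H$ in which $x_1$ has degree at most $1$ and every other vertex has degree at most $2$ (and similarly $BD(G_{n-1})$ with respect to the corresponding endpoint of the central path of $G_{n-1}$, the one adjacent to $x_1$ in $G_n$). $M_2(G)$ is the simplicial complex whose vertices are edges of $G$ and faces are $2$-matchings (edge sets in which every vertex has degree at most $2$). $\Sigma_m(\Delta)$ is the join of $\Delta$ with a set of $m$ discrete points, $\Sigma(\Delta)$ is the suspension, and $\vee$ is the wedge sum. *)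

theory Defs
  imports "HOL-Analysis.Analysis"
begin

definition simplicial_complex :: "'a set set \<Rightarrow> bool" where
  "simplicial_complex K \<longleftrightarrow> {} \<in> K \<and> (\<forall>F\<in>K. finite F \<and> (\<forall>G. G \<subseteq> F \<longrightarrow> G \<in> K))"

text \<open>Geometric realization: the points are barycentric coordinate functions whose
  support is a face; topologized as a subspace of the product topology on
  'a => real (this agrees with the usual topology for finite complexes).\<close>

definition realization :: "'a set set \<Rightarrow> ('a \<Rightarrow> real) set" where
  "realization K = {f. (\<forall>v. 0 \<le> f v) \<and> {v. f v \<noteq> 0} \<in> K \<and> finite {v. f v \<noteq> 0}
                      \<and> sum f {v. f v \<noteq> 0} = 1}"

definition geom :: "'a set set \<Rightarrow> ('a \<Rightarrow> real) topology" where
  "geom K = top_of_set (realization K)"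

definition vertex_point :: "'a \<Rightarrow> ('a \<Rightarrow> real)" where
  "vertex_point v = (\<lambda>u. if u = v then 1 else 0)"

definition sjoin :: "'a set set \<Rightarrow> 'b set set \<Rightarrow> ('a + 'b) set set" where
  "sjoin K L = {A <+> B | A B. A \<in> K \<and> B \<in> L}"

definition discrete_points :: "nat \<Rightarrow> nat set set" where
  "discrete_points m = insert {} {{i} | i. i < m}"

definition Sigma_m :: "nat \<Rightarrow> 'a set set \<Rightarrow> ('a + nat) set set" where
  "Sigma_m m K = sjoin K (discrete_points m)"

definition suspension :: "'a set set \<Rightarrow> ('a + nat) set set" where
  "suspension K = sjoin K (discrete_points 2)"

definition wedge_space :: "'a topology \<Rightarrow> 'a \<Rightarrow> 'b topology \<Rightarrow> 'b \<Rightarrow> ('a \<times> 'b) topology" where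
  "wedge_space X x0 Y y0 =
     subtopology (prod_topology X Y) ((topspace X \<times> {y0}) \<union> ({x0} \<times> topspace Y))"

text \<open>A graph is given by its set of edges, each a 2-element set of vertices.\<close>

definition edge_degree :: "'v set set \<Rightarrow> 'v \<Rightarrow> nat" where
  "edge_degree H v = card {e\<in>H. v \<in> e}"

definition M2 :: "'v set set \<Rightarrow> 'v set set set" where
  "M2 E = {H. H \<subseteq> E \<and> finite H \<and> (\<forall>v. edge_degree H v \<le> 2)}"

definition BD :: "'v set set \<Rightarrow> 'v \<Rightarrow> 'v set set set" where
  "BD E x = {H. H \<subseteq> E \<and> finite H \<and> edge_degree H x \<le> 1
               \<and> (\<forall>v. v \<noteq> x \<longrightarrow> edge_degree H v \<le> 2)}"

text \<open>Perfect m-caterpillar of length n: central path P 1 - P 2 - ... - P n, and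
  leaves L i j (j < m) attached to P i.  The endpoint x_1 of G_n is P n, so that
  deleting it with its leaves gives G_(n-1), whose corresponding endpoint
  P (n-1) is adjacent to x_1 in G_n.\<close>

datatype cvert = P nat | L nat nat

definition caterpillar :: "nat \<Rightarrow> nat \<Rightarrow> cvert set set" where
  "caterpillar m n =
     {{P i, P (Suc i)} | i. 1 \<le> i \<and> Suc i \<le> n} \<union> {{P i, L i j} | i j. 1 \<le> i \<and> i \<le> n \<and> j < m}"

definition BD_cat :: "nat \<Rightarrow> nat \<Rightarrow> cvert set set set" where
  "BD_cat m n = BD (caterpillar m n) (P n)"

definition M2_cat :: "nat \<Rightarrow> nat \<Rightarrow> cvert set set set" where
  "M2_cat m n = M2 (caterpillar m n)"

end

theory Submission
  imports Defs
begin

(* A face of BD(G_n) contains at most one of the m + 1 edges at the end vertex x_1.  Writing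
   M = M_2(G_(n-1)), A = BD(G_(n-1)), k_j for the leaf edges at x_1 and e for the path edge at x_1,
   this gives BD(G_n) = M + k_0 * M + ... + k_(m-1) * M + e * A with A a subcomplex of M.  The
   cones k_j * M form Sigma_m(M), and e * A is a cone on A glued to it along A, which is
   contractible in Sigma_m(M) since it lies in the cone k_0 * M.  Hence the realization is
   Sigma_m(M) with Sigma(A) wedged on: squeezing the lower half of e * A into k_0 * M and stretching
   its upper half over Sigma(A) is a homotopy equivalence, with all homotopies straight lines
   inside simplices. *)

section \<open>Geometric realizations and straight-line homotopies\<close>

abbreviation supp :: "('a \<Rightarrow> real) \<Rightarrow> 'a set" where
  "supp f \<equiv> {v. f v \<noteq> 0}"

lemma simplicial_complex_finite: "simplicial_complex K \<Longrightarrow> F \<in> K \<Longrightarrow> finite F"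
  unfolding simplicial_complex_def by blast

lemma simplicial_complex_subset: "simplicial_complex K \<Longrightarrow> F \<in> K \<Longrightarrow> G \<subseteq> F \<Longrightarrow> G \<in> K"
  unfolding simplicial_complex_def by blast

lemma realization_nonneg: "f \<in> realization K \<Longrightarrow> 0 \<le> f v"
  unfolding realization_def by blast

lemma realization_sum_eq_1:
  assumes "f \<in> realization K" "supp f \<subseteq> \<sigma>" "finite \<sigma>"
  shows "sum f \<sigma> = 1"
proof -
  have "sum f (supp f) = sum f \<sigma>"
    by (rule sum.mono_neutral_left[OF assms(3) assms(2)]) auto
  then show ?thesis using assms(1) unfolding realization_def by auto
qed

lemma realization_iff:
  assumes K: "simplicial_complex K"
  shows "f \<in> realization K \<longleftrightarrow> (\<forall>v. 0 \<le> f v) \<and> (\<exists>\<sigma>\<in>K. supp f \<subseteq> \<sigma> \<and> sum f \<sigma> = 1)"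
proof
  assume "f \<in> realization K"
  then show "(\<forall>v. 0 \<le> f v) \<and> (\<exists>\<sigma>\<in>K. supp f \<subseteq> \<sigma> \<and> sum f \<sigma> = 1)"
    unfolding realization_def by auto
next
  assume "(\<forall>v. 0 \<le> f v) \<and> (\<exists>\<sigma>\<in>K. supp f \<subseteq> \<sigma> \<and> sum f \<sigma> = 1)"
  then obtain \<sigma> where nonneg: "\<forall>v. 0 \<le> f v" and \<sigma>: "\<sigma> \<in> K" "supp f \<subseteq> \<sigma>" "sum f \<sigma> = 1"
    by blast
  have fin: "finite \<sigma>" using simplicial_complex_finite[OF K \<sigma>(1)] .
  have "sum f (supp f) = sum f \<sigma>"
    by (rule sum.mono_neutral_left[OF fin \<sigma>(2)]) auto
  then show "f \<in> realization K"
    using nonneg \<sigma> fin simplicial_complex_subset[OF K \<sigma>(1,2)]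
    unfolding realization_def by (auto intro: finite_subset)
qed

definition in_common_simplex :: "'a set set \<Rightarrow> ('a \<Rightarrow> real) \<Rightarrow> ('a \<Rightarrow> real) \<Rightarrow> bool" where
  "in_common_simplex K f g \<longleftrightarrow>
     f \<in> realization K \<and> g \<in> realization K \<and> (\<exists>\<sigma>\<in>K. supp f \<subseteq> \<sigma> \<and> supp g \<subseteq> \<sigma>)"

lemma in_common_simplex_refl: "f \<in> realization K \<Longrightarrow> in_common_simplex K f f"
  unfolding in_common_simplex_def realization_def by blast

lemma in_common_simplex_sym: "in_common_simplex K f g \<Longrightarrow> in_common_simplex K g f"
  unfolding in_common_simplex_def by blast

lemma in_common_simplexI:
  "f \<in> realization K \<Longrightarrow> g \<in> realization K \<Longrightarrow> \<sigma> \<in> K \<Longrightarrow> supp f \<subseteq> \<sigma> \<Longrightarrow> supp g \<subseteq> \<sigma>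
    \<Longrightarrow> in_common_simplex K f g"
  unfolding in_common_simplex_def by blast

definition interpolate :: "real \<Rightarrow> ('a \<Rightarrow> real) \<Rightarrow> ('a \<Rightarrow> real) \<Rightarrow> 'a \<Rightarrow> real" where
  "interpolate s f g = (\<lambda>w. (1 - s) * f w + s * g w)"

lemma interpolate_same [simp]: "interpolate s f f = f"
  by (rule ext) (simp add: interpolate_def algebra_simps)

lemma interpolate_in_realization:
  assumes K: "simplicial_complex K" and fg: "in_common_simplex K f g" and s: "0 \<le> s" "s \<le> 1"
  shows "interpolate s f g \<in> realization K"
proof -
  obtain \<sigma> where f: "f \<in> realization K" and g: "g \<in> realization K"
    and \<sigma>: "\<sigma> \<in> K" "supp f \<subseteq> \<sigma>" "supp g \<subseteq> \<sigma>"
    using fg unfolding in_common_simplex_def by blast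
  have fin: "finite \<sigma>" using simplicial_complex_finite[OF K \<sigma>(1)] .
  have "sum f \<sigma> = 1" "sum g \<sigma> = 1"
    using realization_sum_eq_1 f g \<sigma> fin by blast+
  then have "sum (interpolate s f g) \<sigma> = 1"
    by (simp add: interpolate_def sum.distrib flip: sum_distrib_left)
  moreover have "supp (interpolate s f g) \<subseteq> \<sigma>"
  proof
    fix v assume "v \<in> supp (interpolate s f g)"
    then have "f v \<noteq> 0 \<or> g v \<noteq> 0" by (auto simp: interpolate_def)
    then show "v \<in> \<sigma>" using \<sigma> by blast
  qed
  moreover have "0 \<le> interpolate s f g v" for v
    using f g s by (simp add: interpolate_def realization_nonneg)
  ultimately show ?thesis
    using \<sigma>(1) unfolding realization_iff[OF K] by blast
qed

lemma continuous_on_coordinate [continuous_intros]: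
  "continuous_on S (\<lambda>x::'i \<Rightarrow> 'b::topological_space. x i)"
  by (rule continuous_on_subset[OF continuous_on_product_coordinates]) simp

lemma continuous_on_if_const [continuous_intros]:
  "(c \<Longrightarrow> continuous_on S f) \<Longrightarrow> (\<not> c \<Longrightarrow> continuous_on S g)
    \<Longrightarrow> continuous_on S (\<lambda>x. if c then f x else g x)"
  by (cases c) auto

lemma continuous_on_interpolate [continuous_intros]:
  fixes f g :: "'x::topological_space \<Rightarrow> 'a \<Rightarrow> real"
  assumes "continuous_on T s" "continuous_on T f" "continuous_on T g"
  shows "continuous_on T (\<lambda>p. interpolate (s p) (f p) (g p))"
proof (rule continuous_on_coordinatewise_then_product)
  fix w
  have "continuous_on T (\<lambda>p. f p w)" "continuous_on T (\<lambda>p. g p w)"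
    using assms(2,3) by (simp_all add: continuous_on_product_then_coordinatewise)
  then show "continuous_on T (\<lambda>p. interpolate (s p) (f p) (g p) w)"
    unfolding interpolate_def using assms(1) by (intro continuous_intros)
qed

lemma homotopic_with_interpolate:
  fixes f g :: "'x::topological_space \<Rightarrow> 'a \<Rightarrow> real"
  assumes "continuous_on T f" "continuous_on T g"
    and "\<And>p s. p \<in> T \<Longrightarrow> 0 \<le> s \<Longrightarrow> s \<le> 1 \<Longrightarrow> interpolate s (f p) (g p) \<in> U"
  shows "homotopic_with_canon (\<lambda>_. True) T U f g"
  unfolding homotopic_with_def
proof (intro exI conjI allI ballI)
  let ?h = "\<lambda>q::real \<times> 'x. interpolate (fst q) (f (snd q)) (g (snd q))"
  have "continuous_on ({0..1} \<times> T) ?h"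
    by (intro continuous_intros continuous_on_compose2[OF assms(1)]
        continuous_on_compose2[OF assms(2)]) auto
  then show "continuous_map (prod_topology (top_of_set {0..1}) (top_of_set T)) (top_of_set U) ?h"
    using assms(3) by auto
qed (auto simp: interpolate_def)

lemma homotopic_with_interpolate_pair:
  fixes f g :: "'x::topological_space \<Rightarrow> ('a \<Rightarrow> real) \<times> ('b \<Rightarrow> real)"
  assumes "continuous_on T f" "continuous_on T g"
    and "\<And>p s. p \<in> T \<Longrightarrow> 0 \<le> s \<Longrightarrow> s \<le> 1 \<Longrightarrow>
           (interpolate s (fst (f p)) (fst (g p)), interpolate s (snd (f p)) (snd (g p))) \<in> U"
  shows "homotopic_with_canon (\<lambda>_. True) T U f g"
  unfolding homotopic_with_def
proof (intro exI conjI allI ballI)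
  let ?h = "\<lambda>q::real \<times> 'x. (interpolate (fst q) (fst (f (snd q))) (fst (g (snd q))),
                             interpolate (fst q) (snd (f (snd q))) (snd (g (snd q))))"
  have "continuous_on ({0..1} \<times> T) ?h"
    by (intro continuous_intros continuous_on_compose2[OF assms(1)]
        continuous_on_compose2[OF assms(2)]) auto
  moreover have "?h ` ({0..1} \<times> T) \<subseteq> U"
    using assms(3) by fastforce
  ultimately show
    "continuous_map (prod_topology (top_of_set {0..1}) (top_of_set T)) (top_of_set U) ?h"
    by (simp add: image_subset_iff_funcset)
qed (simp_all add: interpolate_def)

lemma homotopic_in_realization:
  assumes K: "simplicial_complex K" and "continuous_on T f" "continuous_on T g"
    and "\<And>p. p \<in> T \<Longrightarrow> in_common_simplex K (f p) (g p)"
  shows "homotopic_with_canon (\<lambda>_. True) T (realization K) f g"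
  using assms by (intro homotopic_with_interpolate interpolate_in_realization) auto

definition in_wedge_simplex ::
    "'a set set \<Rightarrow> 'b set set \<Rightarrow> ('a \<Rightarrow> real) \<Rightarrow> ('b \<Rightarrow> real) \<Rightarrow>
      ('a \<Rightarrow> real) \<times> ('b \<Rightarrow> real) \<Rightarrow> ('a \<Rightarrow> real) \<times> ('b \<Rightarrow> real) \<Rightarrow> bool" where
  "in_wedge_simplex K K' b b' p q \<longleftrightarrow>
     snd p = b' \<and> snd q = b' \<and> in_common_simplex K (fst p) (fst q) \<or>
     fst p = b \<and> fst q = b \<and> in_common_simplex K' (snd p) (snd q)"

lemma in_wedge_simplex_left:
  "in_common_simplex K y y' \<Longrightarrow> in_wedge_simplex K K' b b' (y, b') (y', b')"
  unfolding in_wedge_simplex_def by simp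

lemma in_wedge_simplex_right:
  "in_common_simplex K' z z' \<Longrightarrow> in_wedge_simplex K K' b b' (b, z) (b, z')"
  unfolding in_wedge_simplex_def by simp

lemma homotopic_in_wedge:
  assumes K: "simplicial_complex K" and K': "simplicial_complex K'"
    and "continuous_on T f" "continuous_on T g"
    and "\<And>p. p \<in> T \<Longrightarrow> in_wedge_simplex K K' b b' (f p) (g p)"
  shows "homotopic_with_canon (\<lambda>_. True) T (realization K \<times> {b'} \<union> {b} \<times> realization K') f g"
proof (rule homotopic_with_interpolate_pair[OF assms(3,4)])
  fix p and s :: real
  assume p: "p \<in> T" and s: "0 \<le> s" "s \<le> 1"
  from assms(5)[OF p, unfolded in_wedge_simplex_def] s
    interpolate_in_realization[OF K] interpolate_in_realization[OF K']
  show "(interpolate s (fst (f p)) (fst (g p)), interpolate s (snd (f p)) (snd (g p)))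
          \<in> realization K \<times> {b'} \<union> {b} \<times> realization K'"
    by (elim disjE conjE) simp_all
qed

lemma wedge_space_geom:
  assumes "b \<in> realization K" "b' \<in> realization K'"
  shows "wedge_space (geom K) b (geom K') b' =
    top_of_set (realization K \<times> {b'} \<union> {b} \<times> realization K')"
proof -
  have "(realization K \<times> realization K') \<inter> (realization K \<times> {b'} \<union> {b} \<times> realization K')
      = realization K \<times> {b'} \<union> {b} \<times> realization K'"
    using assms by auto
  then show ?thesis
    unfolding wedge_space_def geom_def by (simp add: subtopology_subtopology)
qed

section \<open>Joins with discrete points\<close>

lemma simplicial_complex_discrete_points: "simplicial_complex (discrete_points n)"
  unfolding simplicial_complex_def discrete_points_def by (auto simp: subset_singleton_iff)

lemma simplicial_complex_sjoin:
  assumes K: "simplicial_complex K" and K': "simplicial_complex K'"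
  shows "simplicial_complex (sjoin K K')"
  unfolding simplicial_complex_def
proof (intro conjI ballI allI impI)
  have "{} \<in> K" "{} \<in> K'"
    using K K' unfolding simplicial_complex_def by blast+
  then show "{} \<in> sjoin K K'"
    unfolding sjoin_def by (intro CollectI exI[of _ "{}"]) auto
next
  fix F assume "F \<in> sjoin K K'"
  then obtain A B where F: "F = A <+> B" "A \<in> K" "B \<in> K'"
    unfolding sjoin_def by blast
  then show "finite F"
    using simplicial_complex_finite[OF K F(2)] simplicial_complex_finite[OF K' F(3)] by simp
  fix G assume G: "G \<subseteq> F"
  have "{a. Inl a \<in> G} \<subseteq> A" "{b. Inr b \<in> G} \<subseteq> B"
    using G F(1) by auto
  then have "{a. Inl a \<in> G} \<in> K" "{b. Inr b \<in> G} \<in> K'"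
    using simplicial_complex_subset[OF K F(2)] simplicial_complex_subset[OF K' F(3)] by auto
  moreover have "G = {a. Inl a \<in> G} <+> {b. Inr b \<in> G}"
  proof (rule set_eqI)
    fix x show "x \<in> G \<longleftrightarrow> x \<in> {a. Inl a \<in> G} <+> {b. Inr b \<in> G}"
      by (cases x) auto
  qed
  ultimately show "G \<in> sjoin K K'"
    unfolding sjoin_def by blast
qed

lemma simplicial_complex_sjoin_discrete_points:
  "simplicial_complex K \<Longrightarrow> simplicial_complex (sjoin K (discrete_points n))"
  by (rule simplicial_complex_sjoin[OF _ simplicial_complex_discrete_points])

lemma Plus_singleton_in_sjoin_discrete_points:
  "S \<in> K \<Longrightarrow> j < n \<Longrightarrow> S <+> {j} \<in> sjoin K (discrete_points n)"
  unfolding sjoin_def discrete_points_def by blast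

lemma realization_sjoin_discrete_pointsE:
  assumes K: "simplicial_complex K" and n: "0 < n"
    and y: "y \<in> realization (sjoin K (discrete_points n))"
  obtains S j where "S \<in> K" "j < n" "supp y \<subseteq> S <+> {j}" "sum (y \<circ> Inl) S + y (Inr j) = 1"
proof -
  obtain \<sigma> where \<sigma>: "\<sigma> \<in> sjoin K (discrete_points n)" "supp y \<subseteq> \<sigma>"
    using y unfolding realization_def by blast
  then obtain S B where SB: "\<sigma> = S <+> B" "S \<in> K" "B \<in> discrete_points n"
    unfolding sjoin_def by blast
  obtain j where j: "j < n" "B \<subseteq> {j}"
    using SB(3) n unfolding discrete_points_def by auto
  have fin: "finite S" using simplicial_complex_finite[OF K SB(2)] .
  have supp: "supp y \<subseteq> S <+> {j}" using \<sigma> SB j by auto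
  have "sum y (S <+> {j}) = 1"
    using realization_sum_eq_1[OF y supp] fin by simp
  then show thesis
    using that SB(2) j supp fin by (simp add: sum.Plus)
qed

lemma realization_sjoin_discrete_pointsI:
  assumes K: "simplicial_complex K" and "\<And>v. 0 \<le> y v" "S \<in> K" "j < n" "supp y \<subseteq> S <+> {j}"
    and "sum (y \<circ> Inl) S + y (Inr j) = 1"
  shows "y \<in> realization (sjoin K (discrete_points n))"
proof -
  have "finite S" using simplicial_complex_finite[OF K assms(3)] .
  then have "sum y (S <+> {j}) = 1" using assms(6) by (simp add: sum.Plus)
  then show ?thesis
    using assms(2,5) Plus_singleton_in_sjoin_discrete_points[OF assms(3,4)]
    unfolding realization_iff[OF simplicial_complex_sjoin_discrete_points[OF K]] by blast
qed

abbreviation apex0 :: "'a + nat \<Rightarrow> real" where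
  "apex0 \<equiv> vertex_point (Inr 0)"

lemma apex0_in_realization_sjoin:
  assumes K: "simplicial_complex K" and n: "0 < n"
  shows "apex0 \<in> realization (sjoin K (discrete_points n))"
proof (rule realization_sjoin_discrete_pointsI[OF K _ _ n])
  show "{} \<in> K" using K unfolding simplicial_complex_def by blast
qed (auto simp: vertex_point_def)

lemma in_common_simplex_apex0:
  assumes K: "simplicial_complex K" and n: "0 < n" and S: "S \<in> K"
    and y: "y \<in> realization (sjoin K (discrete_points n))" "supp y \<subseteq> S <+> {0}"
  shows "in_common_simplex (sjoin K (discrete_points n)) y apex0"
proof (rule in_common_simplexI[OF y(1) _ Plus_singleton_in_sjoin_discrete_points[OF S n] y(2)])
  show "apex0 \<in> realization (sjoin K (discrete_points n))"
    using apex0_in_realization_sjoin[OF K n] .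
qed (auto simp: vertex_point_def)

section \<open>Attaching a cone along a subcomplex\<close>

(* Weights of the maps below as functions of the height t = x e of a point x in the cone e * A.  The
   denominators are cut off at 1/2 and 1/4, so they equal 1 - t exactly where the weights matter. *)

definition lower_scale :: "real \<Rightarrow> real" where
  "lower_scale t = max 0 (1 - 2 * t) / max (1 - t) (1/2)"

definition upper_scale :: "real \<Rightarrow> real" where
  "upper_scale t = max 0 (min ((4 * t - 2) / max (1 - t) (1/4)) 4)"

definition proj_scale :: "real \<Rightarrow> real" where
  "proj_scale t = 1 / max (1 - t) (1/4)"

lemma lower_scale_nonneg: "0 \<le> lower_scale t"
  unfolding lower_scale_def by simp

lemma upper_scale_nonneg: "0 \<le> upper_scale t"
  unfolding upper_scale_def by simp

lemma proj_scale_nonneg: "0 \<le> proj_scale t"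
  unfolding proj_scale_def by simp

lemma lower_scale_0 [simp]: "lower_scale 0 = 1"
  unfolding lower_scale_def by simp

lemma proj_scale_0 [simp]: "proj_scale 0 = 1"
  unfolding proj_scale_def by simp

lemma lower_scale_eq_0: "1/2 \<le> t \<Longrightarrow> lower_scale t = 0"
  unfolding lower_scale_def by simp

lemma upper_scale_eq_0:
  assumes "t \<le> 1/2"
  shows "upper_scale t = 0"
proof -
  have "(4 * t - 2) / max (1 - t) (1/4) \<le> 0"
    by (rule divide_nonpos_pos) (use assms in auto)
  then show ?thesis unfolding upper_scale_def by simp
qed

lemma lower_scale_weights:
  assumes "t \<le> 1"
  shows "(1 - t) * lower_scale t + min 1 (2 * t) = 1"
proof (cases "t \<le> 1/2")
  case True
  then have "max (1 - t) (1/2) = 1 - t" "max 0 (1 - 2 * t) = 1 - 2 * t" "min 1 (2 * t) = 2 * t"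
    by auto
  then show ?thesis using True by (simp add: lower_scale_def)
qed (simp add: lower_scale_eq_0)

lemma upper_scale_weights:
  assumes "1/2 \<le> t" "t \<le> 1"
  shows "(1 - t) * upper_scale t + max 0 (min 1 (3 - 4 * t)) + max 0 (4 * t - 3) = 1"
proof (cases "t \<le> 3/4")
  case True
  then have "max (1 - t) (1/4) = 1 - t" "max 0 (4 * t - 3) = 0"
    "max 0 (min 1 (3 - 4 * t)) = 3 - 4 * t"
    using assms by auto
  moreover have "0 \<le> (4 * t - 2) / (1 - t)" "(4 * t - 2) / (1 - t) \<le> 4"
    using True assms by (simp_all add: divide_le_eq)
  ultimately show ?thesis using True by (simp add: upper_scale_def)
next
  case False
  then have "max (1 - t) (1/4) = 1/4" "max 0 (4 * t - 3) = 4 * t - 3"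
    "max 0 (min 1 (3 - 4 * t)) = 0"
    "min ((4 * t - 2) * 4) 4 = 4"
    by auto
  then show ?thesis by (simp add: upper_scale_def algebra_simps)
qed

lemma proj_scale_weights: "t \<le> 1 \<Longrightarrow> (1 - t) * proj_scale t + max 0 (4 * t - 3) = 1"
  unfolding proj_scale_def by (auto simp: max_def field_simps)

lemma continuous_on_lower_scale [continuous_intros]:
  "continuous_on S f \<Longrightarrow> continuous_on S (\<lambda>x. lower_scale (f x))"
  unfolding lower_scale_def by (intro continuous_intros) (auto simp: max_def)

lemma continuous_on_upper_scale [continuous_intros]:
  "continuous_on S f \<Longrightarrow> continuous_on S (\<lambda>x. upper_scale (f x))"
  unfolding upper_scale_def by (intro continuous_intros) (auto simp: max_def)

lemma continuous_on_proj_scale [continuous_intros]: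
  "continuous_on S f \<Longrightarrow> continuous_on S (\<lambda>x. proj_scale (f x))"
  unfolding proj_scale_def by (intro continuous_intros) (auto simp: max_def)

locale cone_extension =
  fixes M A :: "'v set set" and m :: nat and k :: "nat \<Rightarrow> 'v" and e :: 'v
  assumes M: "simplicial_complex M" and A: "simplicial_complex A" and A_subset_M: "A \<subseteq> M"
    and m_pos: "0 < m" and inj_k: "inj_on k {..<m}"
    and k_notin_M: "\<And>j S. j < m \<Longrightarrow> S \<in> M \<Longrightarrow> k j \<notin> S"
    and e_notin_M: "\<And>S. S \<in> M \<Longrightarrow> e \<notin> S"
    and k_neq_e: "\<And>j. j < m \<Longrightarrow> k j \<noteq> e"
begin

definition K :: "'v set set" where
  "K = M \<union> {insert (k j) S | j S. j < m \<and> S \<in> M} \<union> {insert e S | S. S \<in> A}"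

lemma e_notin_A: "S \<in> A \<Longrightarrow> e \<notin> S"
  using e_notin_M A_subset_M by blast

lemma k_notin_A: "j < m \<Longrightarrow> S \<in> A \<Longrightarrow> k j \<notin> S"
  using k_notin_M A_subset_M by blast

lemma k_cone_in_K: "j < m \<Longrightarrow> S \<in> M \<Longrightarrow> insert (k j) S \<in> K"
  unfolding K_def by blast

lemma e_cone_in_K: "S \<in> A \<Longrightarrow> insert e S \<in> K"
  unfolding K_def by blast

lemma simplicial_complex_K: "simplicial_complex K"
  unfolding simplicial_complex_def
proof (intro conjI ballI allI impI)
  show "{} \<in> K" using M unfolding K_def simplicial_complex_def by blast
next
  fix F assume F: "F \<in> K"
  then consider "F \<in> M" | j S where "F = insert (k j) S" "j < m" "S \<in> M"
    | S where "F = insert e S" "S \<in> A"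
    unfolding K_def by blast
  note cases = this
  then show "finite F"
    by cases (auto dest: simplicial_complex_finite[OF M] simplicial_complex_finite[OF A])
  fix G assume G: "G \<subseteq> F"
  from cases show "G \<in> K"
  proof cases
    case 1
    then show ?thesis using simplicial_complex_subset[OF M _ G] unfolding K_def by blast
  next
    case (2 j S)
    then have "G - {k j} \<in> M" using simplicial_complex_subset[OF M, of S "G - {k j}"] G by blast
    show ?thesis
    proof (cases "k j \<in> G")
      case True
      then show ?thesis using k_cone_in_K[OF 2(2) \<open>G - {k j} \<in> M\<close>] by (simp add: insert_absorb)
    next
      case False
      then show ?thesis using \<open>G - {k j} \<in> M\<close> unfolding K_def by simp
    qed
  next
    case (3 S)
    then have "G - {e} \<in> A" using simplicial_complex_subset[OF A, of S "G - {e}"] G by blast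
    show ?thesis
    proof (cases "e \<in> G")
      case True
      then show ?thesis using e_cone_in_K[OF \<open>G - {e} \<in> A\<close>] by (simp add: insert_absorb)
    next
      case False
      then show ?thesis using \<open>G - {e} \<in> A\<close> A_subset_M unfolding K_def by auto
    qed
  qed
qed

lemma realization_KE:
  assumes x: "x \<in> realization K"
  obtains (k_cone) S j where "S \<in> M" "j < m" "supp x \<subseteq> insert (k j) S" "sum x S + x (k j) = 1"
    | (e_cone) S where "S \<in> A" "supp x \<subseteq> insert e S" "sum x S + x e = 1"
proof -
  obtain \<sigma> where \<sigma>: "\<sigma> \<in> K" "supp x \<subseteq> \<sigma>"
    using x unfolding realization_def by blast
  have sum_insert: "sum x (insert v S) = sum x S + x v" if "finite S" "v \<notin> S" for v S
    using that by simp
  consider "\<sigma> \<in> M" | j S where "\<sigma> = insert (k j) S" "j < m" "S \<in> M"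
    | S where "\<sigma> = insert e S" "S \<in> A"
    using \<sigma>(1) unfolding K_def by blast
  then show thesis
  proof cases
    case 1
    have "supp x \<subseteq> insert (k 0) \<sigma>" using \<sigma>(2) by blast
    moreover have "sum x (insert (k 0) \<sigma>) = 1"
      using realization_sum_eq_1[OF x calculation] simplicial_complex_finite[OF M 1] by simp
    ultimately show thesis
      using k_cone 1 m_pos sum_insert k_notin_M[OF m_pos 1] simplicial_complex_finite[OF M 1]
      by auto
  next
    case (2 j S)
    have "sum x (insert (k j) S) = 1"
      using realization_sum_eq_1[OF x] \<sigma>(2) 2 simplicial_complex_finite[OF M] by auto
    then show thesis
      using k_cone 2 \<sigma>(2) sum_insert k_notin_M simplicial_complex_finite[OF M] by auto
  next
    case (3 S)
    have "sum x (insert e S) = 1"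
      using realization_sum_eq_1[OF x] \<sigma>(2) 3 simplicial_complex_finite[OF A] by auto
    then show thesis
      using e_cone 3 \<sigma>(2) sum_insert e_notin_A simplicial_complex_finite[OF A] by auto
  qed
qed

lemma realization_K_k_coneI:
  assumes "\<And>v. 0 \<le> x v" "S \<in> M" "j < m" "supp x \<subseteq> insert (k j) S" "sum x S + x (k j) = 1"
  shows "x \<in> realization K"
proof -
  have "sum x (insert (k j) S) = 1"
    using assms k_notin_M simplicial_complex_finite[OF M] by (simp add: add.commute)
  then show ?thesis
    using assms(1,4) k_cone_in_K[OF assms(3,2)] unfolding realization_iff[OF simplicial_complex_K]
    by blast
qed

lemma realization_K_e_coneI:
  assumes "\<And>v. 0 \<le> x v" "S \<in> A" "supp x \<subseteq> insert e S" "sum x S + x e = 1"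
  shows "x \<in> realization K"
proof -
  have "sum x (insert e S) = 1"
    using assms e_notin_A simplicial_complex_finite[OF A] by (simp add: add.commute)
  then show ?thesis
    using assms(1,3) e_cone_in_K[OF assms(2)] unfolding realization_iff[OF simplicial_complex_K]
    by blast
qed

(* to_Sigma_m squeezes the part t <= 1/2 of e * A onto k 0 * M and sends t >= 1/2 to the apex;
   to_suspension sends t <= 1/2 to the apex and stretches 1/2 <= t <= 1 over the suspension of A,
   through the lower cone up to t = 3/4 and the upper cone beyond.  project_K pushes the part
   t <= 3/4 radially onto A, and project_suspension does the same on the upper cone of the
   suspension. *)

definition to_Sigma_m :: "('v \<Rightarrow> real) \<Rightarrow> 'v + nat \<Rightarrow> real" where
  "to_Sigma_m x = (\<lambda>i. case i of
      Inl w \<Rightarrow> if w = e \<or> w \<in> k ` {..<m} then 0 else x w * lower_scale (x e)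
    | Inr j \<Rightarrow> if j < m then x (k j) + (if j = 0 then min 1 (2 * x e) else 0) else 0)"

definition to_suspension :: "('v \<Rightarrow> real) \<Rightarrow> 'v + nat \<Rightarrow> real" where
  "to_suspension x = (\<lambda>i. case i of
      Inl w \<Rightarrow> if w = e \<or> w \<in> k ` {..<m} then 0 else x w * upper_scale (x e)
    | Inr j \<Rightarrow> if j = 0 then max 0 (min 1 (3 - 4 * x e))
              else if j = 1 then max 0 (4 * x e - 3) else 0)"

definition to_wedge :: "('v \<Rightarrow> real) \<Rightarrow> ('v + nat \<Rightarrow> real) \<times> ('v + nat \<Rightarrow> real)" where
  "to_wedge x = (to_Sigma_m x, to_suspension x)"

definition from_Sigma_m :: "('v + nat \<Rightarrow> real) \<Rightarrow> 'v \<Rightarrow> real" where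
  "from_Sigma_m y = (\<lambda>w. y (Inl w) + (\<Sum>j<m. if w = k j then y (Inr j) else 0))"

definition from_suspension :: "('v + nat \<Rightarrow> real) \<Rightarrow> 'v \<Rightarrow> real" where
  "from_suspension z =
     (\<lambda>w. z (Inl w) + (if w = k 0 then z (Inr 0) else 0) + (if w = e then z (Inr 1) else 0))"

definition from_wedge :: "('v + nat \<Rightarrow> real) \<times> ('v + nat \<Rightarrow> real) \<Rightarrow> 'v \<Rightarrow> real" where
  "from_wedge p = (\<lambda>w. from_Sigma_m (fst p) w + from_suspension (snd p) w - vertex_point (k 0) w)"

definition project_K :: "('v \<Rightarrow> real) \<Rightarrow> 'v \<Rightarrow> real" where
  "project_K x = (\<lambda>w. if w = e then max 0 (4 * x e - 3)
                      else if w \<in> k ` {..<m} then x w else x w * proj_scale (x e))"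

definition project_suspension :: "('v + nat \<Rightarrow> real) \<Rightarrow> 'v + nat \<Rightarrow> real" where
  "project_suspension z = (\<lambda>i. case i of
      Inl w \<Rightarrow> z (Inl w) * proj_scale (z (Inr 1))
    | Inr j \<Rightarrow> if j = 1 then max 0 (4 * z (Inr 1) - 3) else z (Inr j))"

lemma continuous_on_to_Sigma_m: "continuous_on T to_Sigma_m"
proof (rule continuous_on_coordinatewise_then_product)
  fix i show "continuous_on T (\<lambda>x. to_Sigma_m x i)"
    by (cases i) (auto simp: to_Sigma_m_def intro!: continuous_intros)
qed

lemma continuous_on_to_suspension: "continuous_on T to_suspension"
proof (rule continuous_on_coordinatewise_then_product)
  fix i show "continuous_on T (\<lambda>x. to_suspension x i)"
    by (cases i) (auto simp: to_suspension_def intro!: continuous_intros)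
qed

lemma continuous_on_to_wedge: "continuous_on T to_wedge"
  unfolding to_wedge_def
  by (intro continuous_on_Pair continuous_on_to_Sigma_m continuous_on_to_suspension)

lemma continuous_on_from_suspension: "continuous_on T from_suspension"
  by (rule continuous_on_coordinatewise_then_product)
    (auto simp: from_suspension_def intro!: continuous_intros)

lemma continuous_on_from_wedge: "continuous_on T from_wedge"
proof (rule continuous_on_coordinatewise_then_product)
  fix w
  have "continuous_on T (\<lambda>p. fst p v)" for v
    by (rule continuous_on_product_then_coordinatewise[OF continuous_on_fst[OF continuous_on_id]])
  moreover have "continuous_on T (\<lambda>p. snd p v)" for v
    by (rule continuous_on_product_then_coordinatewise[OF continuous_on_snd[OF continuous_on_id]])
  ultimately show "continuous_on T (\<lambda>p. from_wedge p w)"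
    unfolding from_wedge_def from_Sigma_m_def from_suspension_def by (intro continuous_intros)
qed

lemma continuous_on_project_K: "continuous_on T project_K"
  by (rule continuous_on_coordinatewise_then_product)
    (auto simp: project_K_def intro!: continuous_intros)

lemma continuous_on_project_suspension: "continuous_on T project_suspension"
proof (rule continuous_on_coordinatewise_then_product)
  fix i show "continuous_on T (\<lambda>z. project_suspension z i)"
    by (cases i) (auto simp: project_suspension_def intro!: continuous_intros)
qed

abbreviation wedge :: "(('v + nat \<Rightarrow> real) \<times> ('v + nat \<Rightarrow> real)) set" where
  "wedge \<equiv> realization (Sigma_m m M) \<times> {apex0} \<union> {apex0} \<times> realization (suspension A)"

lemma simplicial_complex_Sigma_m: "simplicial_complex (Sigma_m m M)"
  unfolding Sigma_m_def by (rule simplicial_complex_sjoin_discrete_points[OF M])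

lemma simplicial_complex_suspension: "simplicial_complex (suspension A)"
  unfolding suspension_def by (rule simplicial_complex_sjoin_discrete_points[OF A])

lemma apex0_in_Sigma_m: "apex0 \<in> realization (Sigma_m m M)"
  unfolding Sigma_m_def by (rule apex0_in_realization_sjoin[OF M m_pos])

lemma apex0_in_suspension: "apex0 \<in> realization (suspension A)"
  unfolding suspension_def by (rule apex0_in_realization_sjoin[OF A]) simp

lemma k_eq_k_iff: "i < m \<Longrightarrow> j < m \<Longrightarrow> k i = k j \<longleftrightarrow> i = j"
  using inj_k by (auto simp: inj_on_def)

lemma from_Sigma_m_k: "j < m \<Longrightarrow> from_Sigma_m y (k j) = y (Inl (k j)) + y (Inr j)"
  unfolding from_Sigma_m_def by (simp add: k_eq_k_iff eq_commute[of "k j"] cong: if_cong)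

lemma from_Sigma_m_other: "w \<notin> k ` {..<m} \<Longrightarrow> from_Sigma_m y w = y (Inl w)"
  unfolding from_Sigma_m_def by (force intro: sum.neutral)

lemma from_Sigma_m_apex0: "from_Sigma_m apex0 = vertex_point (k 0)"
proof
  fix w show "from_Sigma_m apex0 w = vertex_point (k 0) w"
    using m_pos by (cases "w \<in> k ` {..<m}")
      (auto simp: from_Sigma_m_k from_Sigma_m_other vertex_point_def k_eq_k_iff)
qed

lemma from_suspension_apex0: "from_suspension apex0 = vertex_point (k 0)"
  using k_neq_e[OF m_pos] by (auto simp: from_suspension_def vertex_point_def)

lemma from_wedge_left: "from_wedge (y, apex0) = from_Sigma_m y"
  by (simp add: from_wedge_def from_suspension_apex0)

lemma from_wedge_right: "from_wedge (apex0, z) = from_suspension z"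
  by (simp add: from_wedge_def from_Sigma_m_apex0)

lemma to_suspension_eq_apex0: "x e \<le> 1/2 \<Longrightarrow> to_suspension x = apex0"
  by (auto simp: to_suspension_def vertex_point_def upper_scale_eq_0 split: sum.split)

lemma to_Sigma_m_eq_apex0:
  "1/2 \<le> x e \<Longrightarrow> (\<And>j. j < m \<Longrightarrow> x (k j) = 0) \<Longrightarrow> to_Sigma_m x = apex0"
  using m_pos by (auto simp: to_Sigma_m_def vertex_point_def lower_scale_eq_0 split: sum.split)

lemma from_Sigma_m_to_Sigma_m:
  assumes "x e = 0"
  shows "from_Sigma_m (to_Sigma_m x) = x"
proof
  fix w show "from_Sigma_m (to_Sigma_m x) w = x w"
    using assms by (cases "w \<in> k ` {..<m}")
      (auto simp: from_Sigma_m_k from_Sigma_m_other to_Sigma_m_def)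
qed

lemma project_K_eq_self: "x e = 0 \<Longrightarrow> project_K x = x"
  by (auto simp: project_K_def)

lemma project_suspension_eq_self: "z (Inr 1) = 0 \<Longrightarrow> project_suspension z = z"
  by (auto simp: project_suspension_def split: sum.split)

lemma project_suspension_apex0: "project_suspension apex0 = apex0"
  by (simp add: project_suspension_eq_self vertex_point_def)

lemma to_suspension_vertex_k0: "to_suspension (vertex_point (k 0)) = apex0"
  using k_neq_e[OF m_pos] by (intro to_suspension_eq_apex0) (simp add: vertex_point_def)

lemma from_Sigma_m_face: "S \<in> M \<Longrightarrow> w \<in> S \<Longrightarrow> from_Sigma_m y w = y (Inl w)"
  using k_notin_M by (force intro: from_Sigma_m_other)

lemma supp_from_Sigma_m:
  assumes S: "S \<in> M" and j: "j < m" and supp_y: "supp y \<subseteq> S <+> {j}"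
  shows "supp (from_Sigma_m y) \<subseteq> insert (k j) S"
proof
  fix w assume w: "w \<in> supp (from_Sigma_m y)"
  show "w \<in> insert (k j) S"
  proof (cases "w \<in> k ` {..<m}")
    case True
    then obtain j' where j': "j' < m" "w = k j'" by blast
    have "y (Inl (k j')) = 0" using supp_y k_notin_M[OF j'(1) S] by auto
    then have "y (Inr j') \<noteq> 0" using w j' by (simp add: from_Sigma_m_k)
    then show ?thesis using supp_y j' by auto
  next
    case False
    then show ?thesis using w supp_y by (auto simp: from_Sigma_m_other)
  qed
qed

lemma supp_from_suspension:
  "supp z \<subseteq> S <+> {0} \<Longrightarrow> supp (from_suspension z) \<subseteq> insert (k 0) S"
  "supp z \<subseteq> S <+> {1} \<Longrightarrow> supp (from_suspension z) \<subseteq> insert e S"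
proof -
  have base: "w \<in> S" if "supp z \<subseteq> S <+> {i}" "z (Inl w) \<noteq> 0" for w i
    using that by auto
  show "supp (from_suspension z) \<subseteq> insert (k 0) S" if supp_z: "supp z \<subseteq> S <+> {0}"
  proof -
    have "z (Inr 1) = 0" using supp_z by auto
    then show ?thesis using base[OF supp_z] by (auto simp: from_suspension_def split: if_splits)
  qed
  show "supp (from_suspension z) \<subseteq> insert e S" if supp_z: "supp z \<subseteq> S <+> {1}"
  proof -
    have "z (Inr 0) = 0" using supp_z by auto
    then show ?thesis using base[OF supp_z] by (auto simp: from_suspension_def split: if_splits)
  qed
qed

context
  fixes x :: "'v \<Rightarrow> real" and S j
  assumes S: "S \<in> M" and j: "j < m" and supp_x: "supp x \<subseteq> insert (k j) S"
    and sum_x: "sum x S + x (k j) = 1"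
begin

lemma k_cone_e_coordinate: "x e = 0"
  using supp_x e_notin_M[OF S] k_neq_e[OF j] by auto

lemma k_cone_supp_to_Sigma_m: "supp (to_Sigma_m x) \<subseteq> S <+> {j}"
proof
  fix i assume i: "i \<in> supp (to_Sigma_m x)"
  have "x (k j') = 0" if "j' < m" "j' \<noteq> j" for j'
    using supp_x k_notin_M[OF that(1) S] k_eq_k_iff[OF that(1) j] that(2) by auto
  then show "i \<in> S <+> {j}"
    using i supp_x k_cone_e_coordinate j by (cases i) (auto simp: to_Sigma_m_def split: if_splits)
qed

lemma k_cone_to_Sigma_m:
  assumes "\<And>v. 0 \<le> x v"
  shows "to_Sigma_m x \<in> realization (Sigma_m m M)"
  unfolding Sigma_m_def
proof (rule realization_sjoin_discrete_pointsI[OF M _ S j k_cone_supp_to_Sigma_m])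
  show "0 \<le> to_Sigma_m x v" for v
    using assms by (auto simp: to_Sigma_m_def lower_scale_nonneg split: sum.split)
  have "sum (to_Sigma_m x \<circ> Inl) S = sum x S"
    using k_notin_M[OF _ S] e_notin_M[OF S] k_cone_e_coordinate
    by (intro sum.cong) (auto simp: to_Sigma_m_def)
  then show "sum (to_Sigma_m x \<circ> Inl) S + to_Sigma_m x (Inr j) = 1"
    using sum_x j k_cone_e_coordinate by (cases "j = 0") (simp_all add: to_Sigma_m_def)
qed

end

context
  fixes x :: "'v \<Rightarrow> real" and S
  assumes S: "S \<in> A" and supp_x: "supp x \<subseteq> insert e S" and sum_x: "sum x S + x e = 1"
begin

lemma e_cone_k_coordinate: "j < m \<Longrightarrow> x (k j) = 0"
  using supp_x k_notin_A[OF _ S] k_neq_e by blast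

lemma e_cone_base_part:
  "(if w = e \<or> w \<in> k ` {..<m} then 0 else x w * c) = (if w \<in> S then x w * c else 0)"
  using supp_x e_notin_A[OF S] k_notin_A[OF _ S] by auto

lemma e_cone_sum_base_part: "(\<Sum>w\<in>S. x w * c) = c * (1 - x e)"
proof -
  have "(\<Sum>w\<in>S. x w * c) = sum x S * c" by (simp add: sum_distrib_right)
  also have "\<dots> = c * (1 - x e)" using sum_x by simp
  finally show ?thesis .
qed

lemma e_cone_supp_to_Sigma_m: "supp (to_Sigma_m x) \<subseteq> S <+> {0}"
proof
  fix i assume "i \<in> supp (to_Sigma_m x)"
  then show "i \<in> S <+> {0}"
    using e_cone_k_coordinate
    by (cases i) (auto simp: to_Sigma_m_def e_cone_base_part split: if_splits)
qed

lemma e_cone_supp_to_suspension: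
  "x e \<le> 3/4 \<Longrightarrow> supp (to_suspension x) \<subseteq> S <+> {0}"
  "3/4 \<le> x e \<Longrightarrow> supp (to_suspension x) \<subseteq> S <+> {1}"
proof -
  have Inl: "w \<in> S" if "to_suspension x (Inl w) \<noteq> 0" for w
    using that by (auto simp: to_suspension_def e_cone_base_part split: if_splits)
  have Inr: "j = 0 \<and> x e < 3/4 \<or> j = 1 \<and> 3/4 < x e" if "to_suspension x (Inr j) \<noteq> 0" for j
    using that by (auto simp: to_suspension_def split: if_splits)
  show "supp (to_suspension x) \<subseteq> S <+> {0}" if "x e \<le> 3/4"
  proof
    fix i assume "i \<in> supp (to_suspension x)"
    then show "i \<in> S <+> {0}" using that by (cases i) (auto dest: Inl Inr)
  qed
  show "supp (to_suspension x) \<subseteq> S <+> {1}" if "3/4 \<le> x e"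
  proof
    fix i assume "i \<in> supp (to_suspension x)"
    then show "i \<in> S <+> {1}" using that by (cases i) (auto dest: Inl Inr)
  qed
qed

lemma e_cone_supp_from_to_wedge:
  "x e \<le> 3/4 \<Longrightarrow> supp (from_wedge (to_wedge x)) \<subseteq> insert (k 0) S"
  "3/4 \<le> x e \<Longrightarrow> supp (from_wedge (to_wedge x)) \<subseteq> insert e S"
proof -
  have S_M: "S \<in> M" using S A_subset_M by blast
  have to_Sigma_m: "to_Sigma_m x = apex0" if "1/2 \<le> x e"
    by (rule to_Sigma_m_eq_apex0[OF that e_cone_k_coordinate])
  show "supp (from_wedge (to_wedge x)) \<subseteq> insert (k 0) S" if "x e \<le> 3/4"
  proof (cases "x e \<le> 1/2")
    case True
    then show ?thesis
      using supp_from_Sigma_m[OF S_M m_pos e_cone_supp_to_Sigma_m]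
      by (simp add: to_wedge_def to_suspension_eq_apex0 from_wedge_left)
  next
    case False
    then show ?thesis
      using supp_from_suspension(1)[OF e_cone_supp_to_suspension(1)[OF that]] to_Sigma_m
      by (simp add: to_wedge_def from_wedge_right)
  qed
  show "supp (from_wedge (to_wedge x)) \<subseteq> insert e S" if "3/4 \<le> x e"
    using that supp_from_suspension(2)[OF e_cone_supp_to_suspension(2)[OF that]] to_Sigma_m
    by (simp add: to_wedge_def from_wedge_right)
qed

context
  assumes x_nonneg: "\<And>v. 0 \<le> x v"
begin

lemma e_cone_height: "x e \<le> 1"
  using sum_x sum_nonneg[of S x] x_nonneg by simp

lemma e_cone_to_Sigma_m: "to_Sigma_m x \<in> realization (Sigma_m m M)"
  unfolding Sigma_m_def
proof (rule realization_sjoin_discrete_pointsI[OF M _ _ m_pos e_cone_supp_to_Sigma_m])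
  show "S \<in> M" using S A_subset_M by blast
  show "0 \<le> to_Sigma_m x v" for v
    using x_nonneg by (auto simp: to_Sigma_m_def lower_scale_nonneg split: sum.split)
  show "sum (to_Sigma_m x \<circ> Inl) S + to_Sigma_m x (Inr 0) = 1"
    using lower_scale_weights[OF e_cone_height] e_cone_k_coordinate[OF m_pos] m_pos
    by (simp add: to_Sigma_m_def e_cone_base_part e_cone_sum_base_part mult.commute)
qed

lemma e_cone_to_suspension: "to_suspension x \<in> realization (suspension A)"
proof -
  have nonneg: "0 \<le> to_suspension x v" for v
    using x_nonneg by (auto simp: to_suspension_def upper_scale_nonneg split: sum.split)
  have base: "sum (to_suspension x \<circ> Inl) S = upper_scale (x e) * (1 - x e)"
    by (simp add: to_suspension_def e_cone_base_part e_cone_sum_base_part)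
  show ?thesis
    unfolding suspension_def
  proof (cases "x e \<le> 3/4")
    case True
    have "sum (to_suspension x \<circ> Inl) S + to_suspension x (Inr 0) = 1"
    proof (cases "x e \<le> 1/2")
      case True
      then show ?thesis using base by (simp add: upper_scale_eq_0 to_suspension_def)
    next
      case False
      then show ?thesis
        using base upper_scale_weights[of "x e"] e_cone_height \<open>x e \<le> 3/4\<close>
        by (simp add: to_suspension_def mult.commute)
    qed
    then show "to_suspension x \<in> realization (sjoin A (discrete_points 2))"
      using realization_sjoin_discrete_pointsI[OF A nonneg S _ e_cone_supp_to_suspension(1)]
        True by simp
  next
    case False
    have "sum (to_suspension x \<circ> Inl) S + to_suspension x (Inr 1) = 1"
      using base upper_scale_weights[of "x e"] e_cone_height False
      by (simp add: to_suspension_def mult.commute)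
    then show "to_suspension x \<in> realization (sjoin A (discrete_points 2))"
      using realization_sjoin_discrete_pointsI[OF A nonneg S _ e_cone_supp_to_suspension(2)] False
      by simp
  qed
qed

lemma e_cone_to_Sigma_m_or_to_suspension: "to_Sigma_m x = apex0 \<or> to_suspension x = apex0"
  using to_suspension_eq_apex0[of x] to_Sigma_m_eq_apex0[of x] e_cone_k_coordinate by fastforce

lemma e_cone_project_K:
  "project_K x \<in> realization K" "supp (project_K x) \<subseteq> insert e S"
  "x e \<le> 3/4 \<Longrightarrow> supp (project_K x) \<subseteq> S"
proof -
  have project: "project_K x w = (if w = e then max 0 (4 * x e - 3)
                                   else if w \<in> S then x w * proj_scale (x e) else 0)" for w
    using e_cone_base_part[of w "proj_scale (x e)"] e_cone_k_coordinate
    by (auto simp: project_K_def split: if_splits)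
  show supp: "supp (project_K x) \<subseteq> insert e S"
    by (auto simp: project split: if_splits)
  show "supp (project_K x) \<subseteq> S" if "x e \<le> 3/4"
    using that by (auto simp: project split: if_splits)
  have "sum (project_K x) S = (\<Sum>w\<in>S. x w * proj_scale (x e))"
    using e_notin_A[OF S] by (intro sum.cong) (auto simp: project)
  then have "sum (project_K x) S = proj_scale (x e) * (1 - x e)"
    by (simp add: e_cone_sum_base_part)
  then show "project_K x \<in> realization K"
    using proj_scale_weights[OF e_cone_height] x_nonneg proj_scale_nonneg
    by (intro realization_K_e_coneI[OF _ S supp]) (auto simp: project mult.commute)
qed

end

end

lemma from_Sigma_m_in_realization:
  assumes y: "y \<in> realization (Sigma_m m M)"
  shows "from_Sigma_m y \<in> realization K"
proof -
  obtain S j where S: "S \<in> M" and j: "j < m" and supp_y: "supp y \<subseteq> S <+> {j}"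
    and sum_y: "sum (y \<circ> Inl) S + y (Inr j) = 1"
    using realization_sjoin_discrete_pointsE[OF M m_pos y[unfolded Sigma_m_def]] by blast
  have "sum (from_Sigma_m y) S = sum (y \<circ> Inl) S"
    using from_Sigma_m_face[OF S] by (intro sum.cong) auto
  moreover have "from_Sigma_m y (k j) = y (Inr j)"
    using supp_y k_notin_M[OF j S] j by (auto simp: from_Sigma_m_k)
  moreover have "0 \<le> from_Sigma_m y v" for v
    using realization_nonneg[OF y] unfolding from_Sigma_m_def
    by (intro add_nonneg_nonneg sum_nonneg) auto
  ultimately show ?thesis
    using sum_y by (intro realization_K_k_coneI[OF _ S j supp_from_Sigma_m[OF S j supp_y]]) auto
qed

lemma to_wedge_from_Sigma_m:
  assumes y: "y \<in> realization (Sigma_m m M)"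
  shows "to_wedge (from_Sigma_m y) = (y, apex0)"
proof -
  obtain S j where S: "S \<in> M" and j: "j < m" and supp_y: "supp y \<subseteq> S <+> {j}"
    using realization_sjoin_discrete_pointsE[OF M m_pos y[unfolded Sigma_m_def]] by blast
  have e: "from_Sigma_m y e = 0"
    using supp_from_Sigma_m[OF S j supp_y] e_notin_M[OF S] k_neq_e[OF j] by auto
  have "to_Sigma_m (from_Sigma_m y) i = y i" for i
  proof (cases i)
    case (Inl w)
    then show ?thesis
      using supp_y e_notin_M[OF S] k_notin_M[OF _ S] e
      by (auto simp: to_Sigma_m_def from_Sigma_m_other)
  next
    case (Inr j')
    then show ?thesis
      using supp_y k_notin_M[OF _ S] j e by (auto simp: to_Sigma_m_def from_Sigma_m_k)
  qed
  then show ?thesis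
    using e by (auto simp: to_wedge_def to_suspension_eq_apex0)
qed

lemma realization_suspensionE:
  assumes "z \<in> realization (suspension A)"
  obtains (lower) S where "S \<in> A" "supp z \<subseteq> S <+> {0}" "sum (z \<circ> Inl) S + z (Inr 0) = 1"
    | (upper) S where "S \<in> A" "supp z \<subseteq> S <+> {1}" "sum (z \<circ> Inl) S + z (Inr 1) = 1"
proof -
  obtain S i where "S \<in> A" "i < 2" "supp z \<subseteq> S <+> {i}" "sum (z \<circ> Inl) S + z (Inr i) = 1"
    using realization_sjoin_discrete_pointsE[OF A _ assms[unfolded suspension_def]] by auto
  then show thesis
    using lower upper by (cases i) auto
qed

lemma from_suspension_nonneg: "z \<in> realization (suspension A) \<Longrightarrow> 0 \<le> from_suspension z v"
  using realization_nonneg[of z] by (simp add: from_suspension_def)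

lemma from_suspension_cases:
  assumes z: "z \<in> realization (suspension A)"
  obtains (lower) S where "S \<in> A" "supp z \<subseteq> S <+> {0}"
      "supp (from_suspension z) \<subseteq> insert (k 0) S"
      "sum (from_suspension z) S + from_suspension z (k 0) = 1"
    | (upper) S where "S \<in> A" "supp z \<subseteq> S <+> {1}" "sum (z \<circ> Inl) S + z (Inr 1) = 1"
      "supp (from_suspension z) \<subseteq> insert e S" "sum (from_suspension z) S + from_suspension z e = 1"
      "from_suspension z e = z (Inr 1)"
proof -
  have sum: "sum (from_suspension z) S = sum (z \<circ> Inl) S" if "S \<in> A" for S
    using e_notin_A[OF that] k_notin_A[OF m_pos that]
    by (intro sum.cong) (auto simp: from_suspension_def)
  from z show thesis
  proof (cases rule: realization_suspensionE)
    case (lower S)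
    have "from_suspension z (k 0) = z (Inr 0)"
      using lower(2) k_notin_A[OF m_pos lower(1)] k_neq_e[OF m_pos]
      by (auto simp: from_suspension_def)
    then show thesis
      using that(1)[OF lower(1,2) supp_from_suspension(1)[OF lower(2)]] lower(3) sum[OF lower(1)]
      by simp
  next
    case (upper S)
    have "from_suspension z e = z (Inr 1)"
      using upper(2) e_notin_A[OF upper(1)] k_neq_e[OF m_pos] by (auto simp: from_suspension_def)
    then show thesis
      using that(2)[OF upper supp_from_suspension(2)[OF upper(2)]] upper(3) sum[OF upper(1)] by simp
  qed
qed

lemma project_suspension_upper_cone:
  assumes S: "S \<in> A" and z_nonneg: "\<And>v. 0 \<le> z v" and supp_z: "supp z \<subseteq> S <+> {1}"
    and sum_z: "sum (z \<circ> Inl) S + z (Inr 1) = 1"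
  shows "project_suspension z \<in> realization (suspension A)"
    "supp (project_suspension z) \<subseteq> S <+> {1}"
    "z (Inr 1) \<le> 3/4 \<Longrightarrow> supp (project_suspension z) \<subseteq> S <+> {0}"
proof -
  have z_Inr: "z (Inr j) = 0" if "j \<noteq> 1" for j
    using supp_z that by auto
  have Inl: "w \<in> S" if "project_suspension z (Inl w) \<noteq> 0" for w
    using that supp_z by (auto simp: project_suspension_def)
  have Inr: "j = 1 \<and> 3/4 < z (Inr 1)" if "project_suspension z (Inr j) \<noteq> 0" for j
    using that z_Inr by (auto simp: project_suspension_def split: if_splits)
  show supp: "supp (project_suspension z) \<subseteq> S <+> {1}"
  proof
    fix i assume "i \<in> supp (project_suspension z)"
    then show "i \<in> S <+> {1}" by (cases i) (auto dest: Inl Inr)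
  qed
  show "supp (project_suspension z) \<subseteq> S <+> {0}" if "z (Inr 1) \<le> 3/4"
  proof
    fix i assume "i \<in> supp (project_suspension z)"
    then show "i \<in> S <+> {0}" using that by (cases i) (auto dest: Inl Inr)
  qed
  have "z (Inr 1) \<le> 1"
    using sum_z sum_nonneg[of S "z \<circ> Inl"] z_nonneg by simp
  moreover have "sum (project_suspension z \<circ> Inl) S = sum (z \<circ> Inl) S * proj_scale (z (Inr 1))"
    by (simp add: project_suspension_def sum_distrib_right)
  moreover have "sum (z \<circ> Inl) S = 1 - z (Inr 1)"
    using sum_z by simp
  ultimately have "sum (project_suspension z \<circ> Inl) S + project_suspension z (Inr 1) = 1"
    using proj_scale_weights[of "z (Inr 1)"] by (simp add: project_suspension_def mult.commute)
  moreover have "0 \<le> project_suspension z v" for v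
    using z_nonneg proj_scale_nonneg by (simp add: project_suspension_def split: sum.split)
  ultimately show "project_suspension z \<in> realization (suspension A)"
    unfolding suspension_def by (intro realization_sjoin_discrete_pointsI[OF A _ S _ supp]) auto
qed

lemma from_suspension_in_realization:
  assumes z: "z \<in> realization (suspension A)"
  shows "from_suspension z \<in> realization K"
  using z
proof (cases rule: from_suspension_cases)
  case (lower S)
  then show ?thesis
    using A_subset_M by (intro realization_K_k_coneI[OF from_suspension_nonneg[OF z] _ m_pos]) auto
next
  case (upper S)
  then show ?thesis
    by (intro realization_K_e_coneI[OF from_suspension_nonneg[OF z]])
qed

lemma to_Sigma_m_or_to_suspension_eq_apex0:
  assumes x: "x \<in> realization K"
  shows "to_Sigma_m x = apex0 \<or> to_suspension x = apex0"
  using x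
proof (cases rule: realization_KE)
  case (k_cone S j)
  then show ?thesis using to_suspension_eq_apex0 k_cone_e_coordinate[OF k_cone] by simp
next
  case (e_cone S)
  then show ?thesis using e_cone_to_Sigma_m_or_to_suspension realization_nonneg[OF x] by blast
qed

lemma in_common_simplex_to_Sigma_m_from_suspension:
  assumes z: "z \<in> realization (suspension A)"
  shows "in_common_simplex (Sigma_m m M) (to_Sigma_m (from_suspension z)) apex0"
proof -
  note nonneg = from_suspension_nonneg[OF z]
  from z obtain S where "S \<in> M"
    "to_Sigma_m (from_suspension z) \<in> realization (Sigma_m m M)"
    "supp (to_Sigma_m (from_suspension z)) \<subseteq> S <+> {0}"
  proof (cases rule: from_suspension_cases)
    case (lower S)
    then have "S \<in> M" using A_subset_M by blast
    then show thesis
      using that k_cone_to_Sigma_m[OF _ m_pos lower(3,4) nonneg]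
        k_cone_supp_to_Sigma_m[OF _ m_pos lower(3,4)]
      by blast
  next
    case (upper S)
    then have "S \<in> M" using A_subset_M by blast
    then show thesis
      using that e_cone_to_Sigma_m[OF upper(1,4,5) nonneg] e_cone_supp_to_Sigma_m[OF upper(1,4,5)]
      by blast
  qed
  then show ?thesis
    unfolding Sigma_m_def by (intro in_common_simplex_apex0[OF M m_pos])
qed

lemma in_common_simplex_to_suspension_project_suspension:
  assumes z: "z \<in> realization (suspension A)"
  shows "in_common_simplex (suspension A)
           (to_suspension (from_suspension z)) (project_suspension z)"
  using z
proof (cases rule: from_suspension_cases)
  case (lower S)
  then have "S \<in> M" using A_subset_M by blast
  then have "to_suspension (from_suspension z) = apex0"
    using k_cone_e_coordinate[OF _ m_pos lower(3,4)] by (intro to_suspension_eq_apex0) simp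
  moreover have "project_suspension z = z"
    using lower(2) by (intro project_suspension_eq_self) auto
  moreover have "in_common_simplex (suspension A) z apex0"
    using lower z unfolding suspension_def by (intro in_common_simplex_apex0[OF A]) auto
  ultimately show ?thesis
    by (simp add: in_common_simplex_sym)
next
  case (upper S)
  note x = upper(1,4,5)
    and proj = project_suspension_upper_cone[OF upper(1) realization_nonneg[OF z] upper(2,3)]
  have face: "S <+> {i} \<in> suspension A" if "i < 2" for i
    using Plus_singleton_in_sjoin_discrete_points[OF upper(1) that] by (simp add: suspension_def)
  show ?thesis
  proof (cases "z (Inr 1) \<le> 3/4")
    case True
    then show ?thesis
      using e_cone_to_suspension[OF x from_suspension_nonneg[OF z]]
        e_cone_supp_to_suspension(1)[OF x]
        upper(6) proj face[of 0] by (intro in_common_simplexI[where \<sigma> = "S <+> {0}"]) auto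
  next
    case False
    then show ?thesis
      using e_cone_to_suspension[OF x from_suspension_nonneg[OF z]]
        e_cone_supp_to_suspension(2)[OF x]
        upper(6) proj face[of 1] by (intro in_common_simplexI[where \<sigma> = "S <+> {1}"]) auto
  qed
qed

lemma in_common_simplex_project_suspension:
  assumes z: "z \<in> realization (suspension A)"
  shows "in_common_simplex (suspension A) (project_suspension z) z"
  using z
proof (cases rule: realization_suspensionE)
  case (lower S)
  then have "project_suspension z = z"
    by (intro project_suspension_eq_self) auto
  then show ?thesis using in_common_simplex_refl[OF z] by simp
next
  case (upper S)
  note proj = project_suspension_upper_cone[OF upper(1) realization_nonneg[OF z] upper(2,3)]
  show ?thesis
    using proj(1,2) z upper(2) Plus_singleton_in_sjoin_discrete_points[OF upper(1), of 1 2]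
    unfolding suspension_def by (intro in_common_simplexI[where \<sigma> = "S <+> {1}"]) auto
qed

lemma to_wedge_in_wedge:
  assumes x: "x \<in> realization K"
  shows "to_wedge x \<in> wedge"
  using x
proof (cases rule: realization_KE)
  case (k_cone S j)
  then show ?thesis
    using to_suspension_eq_apex0 k_cone_e_coordinate[OF k_cone] k_cone_to_Sigma_m[OF k_cone]
      realization_nonneg[OF x] by (simp add: to_wedge_def)
next
  case (e_cone S)
  note x_e_cone = e_cone realization_nonneg[OF x]
  show ?thesis
    using e_cone_to_Sigma_m_or_to_suspension[OF x_e_cone] e_cone_to_Sigma_m[OF x_e_cone]
      e_cone_to_suspension[OF x_e_cone] by (auto simp: to_wedge_def)
qed

lemma from_wedge_in_realization: "p \<in> wedge \<Longrightarrow> from_wedge p \<in> realization K"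
  using from_Sigma_m_in_realization from_suspension_in_realization
  by (auto simp: from_wedge_left from_wedge_right)

lemma in_common_simplex_from_to_wedge_project_K:
  assumes x: "x \<in> realization K"
  shows "in_common_simplex K (from_wedge (to_wedge x)) (project_K x)"
  using x
proof (cases rule: realization_KE)
  case (k_cone S j)
  have "x e = 0" using k_cone_e_coordinate[OF k_cone] .
  then have "from_wedge (to_wedge x) = x" "project_K x = x"
    by (simp_all add: to_wedge_def to_suspension_eq_apex0 from_wedge_left from_Sigma_m_to_Sigma_m
        project_K_eq_self)
  then show ?thesis using in_common_simplex_refl[OF x] by simp
next
  case (e_cone S)
  have "S \<in> M" using e_cone(1) A_subset_M by blast
  then show ?thesis
    using from_wedge_in_realization[OF to_wedge_in_wedge[OF x]] e_cone_supp_from_to_wedge[OF e_cone]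
      e_cone_project_K[OF e_cone realization_nonneg[OF x]] k_cone_in_K[OF m_pos]
      e_cone_in_K[OF e_cone(1)]
    by (cases "x e \<le> 3/4")
      (auto intro: in_common_simplexI[where \<sigma> = "insert (k 0) S"]
        in_common_simplexI[where \<sigma> = "insert e S"])
qed

lemma in_common_simplex_project_K:
  assumes x: "x \<in> realization K"
  shows "in_common_simplex K (project_K x) x"
  using x
proof (cases rule: realization_KE)
  case (k_cone S j)
  then have "project_K x = x"
    using project_K_eq_self k_cone_e_coordinate[OF k_cone] by simp
  then show ?thesis using in_common_simplex_refl[OF x] by simp
next
  case (e_cone S)
  then show ?thesis
    using x e_cone_project_K[OF e_cone realization_nonneg[OF x]] e_cone_in_K[OF e_cone(1)]
    by (intro in_common_simplexI[where \<sigma> = "insert e S"]) auto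
qed

lemma homotopic_from_wedge_to_wedge_id:
  "homotopic_with_canon (\<lambda>_. True) (realization K) (realization K) (from_wedge \<circ> to_wedge) id"
proof (rule homotopic_with_trans)
  show "homotopic_with_canon (\<lambda>_. True) (realization K) (realization K)
          (from_wedge \<circ> to_wedge) project_K"
    using in_common_simplex_from_to_wedge_project_K
    by (intro homotopic_in_realization[OF simplicial_complex_K] continuous_on_compose
        continuous_on_to_wedge continuous_on_from_wedge continuous_on_project_K) auto
  show "homotopic_with_canon (\<lambda>_. True) (realization K) (realization K) project_K id"
    using in_common_simplex_project_K
    by (intro homotopic_in_realization[OF simplicial_complex_K] continuous_on_project_K
        continuous_on_id) auto
qed

definition resuspend ::
    "('v + nat \<Rightarrow> real) \<times> ('v + nat \<Rightarrow> real) \<Rightarrow> ('v + nat \<Rightarrow> real) \<times> ('v + nat \<Rightarrow> real)"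
  where "resuspend p = (fst p, to_suspension (from_suspension (snd p)))"

definition squeeze ::
    "('v + nat \<Rightarrow> real) \<times> ('v + nat \<Rightarrow> real) \<Rightarrow> ('v + nat \<Rightarrow> real) \<times> ('v + nat \<Rightarrow> real)"
  where "squeeze p = (fst p, project_suspension (snd p))"

lemma continuous_on_resuspend: "continuous_on T resuspend"
  unfolding resuspend_def
  by (intro continuous_on_Pair continuous_on_fst continuous_on_id
      continuous_on_compose2[OF continuous_on_to_suspension[of UNIV]]
      continuous_on_compose2[OF continuous_on_from_suspension[of UNIV]] continuous_on_snd) auto

lemma continuous_on_squeeze: "continuous_on T squeeze"
  unfolding squeeze_def
  by (intro continuous_on_Pair continuous_on_fst continuous_on_id
      continuous_on_compose2[OF continuous_on_project_suspension[of UNIV]] continuous_on_snd) auto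

lemma homotopic_in_wedge_fixing_left:
  assumes "continuous_on wedge f" "continuous_on wedge g"
    and "\<And>y. y \<in> realization (Sigma_m m M) \<Longrightarrow> f (y, apex0) = (y, apex0) \<and> g (y, apex0) = (y, apex0)"
    and "\<And>z. z \<in> realization (suspension A) \<Longrightarrow>
           in_wedge_simplex (Sigma_m m M) (suspension A) apex0 apex0 (f (apex0, z)) (g (apex0, z))"
  shows "homotopic_with_canon (\<lambda>_. True) wedge wedge f g"
proof (rule homotopic_in_wedge[OF simplicial_complex_Sigma_m simplicial_complex_suspension
      assms(1,2)])
  fix p assume "p \<in> wedge"
  then show "in_wedge_simplex (Sigma_m m M) (suspension A) apex0 apex0 (f p) (g p)"
    using assms(3,4) in_wedge_simplex_left[OF in_common_simplex_refl] by auto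
qed

lemma homotopic_to_wedge_from_wedge_id:
  "homotopic_with_canon (\<lambda>_. True) wedge wedge (to_wedge \<circ> from_wedge) id"
proof -
  note homotopic_with_trans [trans]
  have "homotopic_with_canon (\<lambda>_. True) wedge wedge (to_wedge \<circ> from_wedge) resuspend"
  proof (rule homotopic_in_wedge_fixing_left[OF _ continuous_on_resuspend])
    show "continuous_on wedge (to_wedge \<circ> from_wedge)"
      by (rule continuous_on_compose[OF continuous_on_from_wedge continuous_on_to_wedge])
  next
    fix z assume z: "z \<in> realization (suspension A)"
    have "to_suspension (from_suspension z) \<in> realization (suspension A)"
      using in_common_simplex_to_suspension_project_suspension[OF z]
      unfolding in_common_simplex_def by blast
    then show "in_wedge_simplex (Sigma_m m M) (suspension A) apex0 apex0
        ((to_wedge \<circ> from_wedge) (apex0, z)) (resuspend (apex0, z))"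
      using to_Sigma_m_or_to_suspension_eq_apex0[OF from_suspension_in_realization[OF z]]
        in_wedge_simplex_left[OF in_common_simplex_to_Sigma_m_from_suspension[OF z]]
        in_wedge_simplex_right[OF in_common_simplex_refl]
      by (auto simp: from_wedge_right to_wedge_def resuspend_def)
  qed (simp add: from_wedge_left to_wedge_from_Sigma_m resuspend_def from_suspension_apex0
      to_suspension_vertex_k0)
  \<comment> \<open>No straight line joins resuspend to the identity: for 1/2 < z (Inr 1) < 3/4 the point
    to_suspension (from_suspension z) lies in the lower cone while z lies in the upper one.\<close>
  also have "homotopic_with_canon (\<lambda>_. True) wedge wedge resuspend squeeze"
    using in_common_simplex_to_suspension_project_suspension
    by (intro homotopic_in_wedge_fixing_left continuous_on_resuspend continuous_on_squeeze)
      (auto simp: resuspend_def squeeze_def from_suspension_apex0 to_suspension_vertex_k0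
        project_suspension_apex0 intro: in_wedge_simplex_right)
  also have "homotopic_with_canon (\<lambda>_. True) wedge wedge squeeze id"
    using in_common_simplex_project_suspension
    by (intro homotopic_in_wedge_fixing_left continuous_on_squeeze continuous_on_id')
      (auto simp: squeeze_def project_suspension_apex0 intro: in_wedge_simplex_right)
  finally show ?thesis .
qed

theorem homotopy_equivalent_wedge:
  "geom K homotopy_equivalent_space
     wedge_space (geom (Sigma_m m M)) apex0 (geom (suspension A)) apex0"
  unfolding wedge_space_geom[OF apex0_in_Sigma_m apex0_in_suspension]
  unfolding homotopy_equivalent_space_def geom_def
  using to_wedge_in_wedge from_wedge_in_realization continuous_on_to_wedge continuous_on_from_wedge
    homotopic_from_wedge_to_wedge_id homotopic_to_wedge_from_wedge_id
  by (intro exI conjI) auto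

end

section \<open>Degree-bounded edge sets and the caterpillar\<close>

lemma edge_degree_insert:
  assumes "finite H" "a \<notin> H"
  shows "edge_degree (insert a H) v = edge_degree H v + (if v \<in> a then 1 else 0)"
proof -
  have "{b \<in> insert a H. v \<in> b} = (if v \<in> a then insert a {b \<in> H. v \<in> b} else {b \<in> H. v \<in> b})"
    by auto
  then show ?thesis
    using assms unfolding edge_degree_def by simp
qed

lemma edge_degree_eq_0: "(\<And>a. a \<in> H \<Longrightarrow> v \<notin> a) \<Longrightarrow> edge_degree H v = 0"
proof -
  assume "\<And>a. a \<in> H \<Longrightarrow> v \<notin> a"
  then have "{a \<in> H. v \<in> a} = {}" by blast
  then show ?thesis unfolding edge_degree_def by (simp only: card.empty)
qed

lemma edge_degree_mono: "finite H \<Longrightarrow> H' \<subseteq> H \<Longrightarrow> edge_degree H' v \<le> edge_degree H v"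
  unfolding edge_degree_def by (rule card_mono) auto

lemma simplicial_complex_M2: "simplicial_complex (M2 E)"
  unfolding simplicial_complex_def
proof (intro conjI ballI allI impI)
  show "{} \<in> M2 E" by (simp add: M2_def edge_degree_def)
next
  fix H assume "H \<in> M2 E" then show "finite H" by (simp add: M2_def)
next
  fix H H' assume H: "H \<in> M2 E" and H': "H' \<subseteq> H"
  then have "finite H" "edge_degree H v \<le> 2" for v
    unfolding M2_def by auto
  then have "edge_degree H' v \<le> 2" for v
    using edge_degree_mono[OF _ H', of v] by (meson order_trans)
  then show "H' \<in> M2 E" using H H' unfolding M2_def by (auto intro: finite_subset)
qed

lemma simplicial_complex_BD: "simplicial_complex (BD E x)"
  unfolding simplicial_complex_def
proof (intro conjI ballI allI impI)
  show "{} \<in> BD E x" by (simp add: BD_def edge_degree_def)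
next
  fix H assume "H \<in> BD E x" then show "finite H" by (simp add: BD_def)
next
  fix H H' assume H: "H \<in> BD E x" and H': "H' \<subseteq> H"
  then have "finite H" and deg_x: "edge_degree H x \<le> 1"
    and deg: "v \<noteq> x \<Longrightarrow> edge_degree H v \<le> 2" for v
    unfolding BD_def by auto
  then have "edge_degree H' v \<le> edge_degree H v" for v
    using edge_degree_mono[OF _ H'] by blast
  then have "edge_degree H' x \<le> 1" "v \<noteq> x \<Longrightarrow> edge_degree H' v \<le> 2" for v
    using deg_x deg by (meson order_trans)+
  then show "H' \<in> BD E x"
    using H H' unfolding BD_def by (auto intro: finite_subset)
qed

lemma BD_subset_M2: "BD E x \<subseteq> M2 E"
proof
  fix H assume H: "H \<in> BD E x"
  then have "edge_degree H v \<le> 2" for v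
    unfolding BD_def by (cases "v = x") auto
  then show "H \<in> M2 E" using H unfolding BD_def M2_def by auto
qed

context
  fixes E :: "'v set set" and x y :: 'v and l :: "nat \<Rightarrow> 'v" and m :: nat
  assumes x_fresh: "\<And>a. a \<in> E \<Longrightarrow> x \<notin> a"
    and l_fresh: "\<And>a j. a \<in> E \<Longrightarrow> j < m \<Longrightarrow> l j \<notin> a"
    and y_neq_x: "y \<noteq> x" and l_neq_x: "\<And>j. j < m \<Longrightarrow> l j \<noteq> x"
begin

lemma edge_degree_fresh_end_vertex: "H \<subseteq> E \<Longrightarrow> edge_degree H x = 0"
  using x_fresh by (intro edge_degree_eq_0) blast

lemma BD_Int_in_M2: "H \<in> BD E' x \<Longrightarrow> H \<inter> E \<in> M2 E"
proof -
  assume H: "H \<in> BD E' x"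
  have "edge_degree (H \<inter> E) v \<le> 2" for v
  proof (cases "v = x")
    case False
    then have "edge_degree H v \<le> 2" using H unfolding BD_def by auto
    then show ?thesis using edge_degree_mono[of H "H \<inter> E" v] H unfolding BD_def by auto
  qed (simp add: edge_degree_fresh_end_vertex)
  then show ?thesis using H unfolding BD_def M2_def by auto
qed

lemma BD_add_end_vertex_subset:
  "BD (E \<union> insert {y, x} {{x, l j} | j. j < m}) x \<subseteq>
     M2 E \<union> {insert {x, l j} S | j S. j < m \<and> S \<in> M2 E} \<union> {insert {y, x} S | S. S \<in> BD E y}"
proof
  fix H assume H_BD: "H \<in> BD (E \<union> insert {y, x} {{x, l j} | j. j < m}) x"
  then have H: "H \<subseteq> E \<union> insert {y, x} {{x, l j} | j. j < m}" "finite H"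
    and deg_x: "edge_degree H x \<le> 1" and deg: "\<And>v. v \<noteq> x \<Longrightarrow> edge_degree H v \<le> 2"
    unfolding BD_def by auto
  define S where "S = H \<inter> E"
  have S: "S \<in> M2 E" and finite_S: "finite S"
    using BD_Int_in_M2[OF H_BD] unfolding S_def M2_def by auto
  have "card (H - E) \<le> edge_degree H x"
    unfolding edge_degree_def using H by (intro card_mono) auto
  then have "card (H - E) \<le> 1" using deg_x by simp
  then consider "H - E = {}" | a where "H - E = {a}"
    using H(2) by (auto simp: card_le_Suc0_iff_eq)
  then show "H \<in> M2 E \<union> {insert {x, l j} S | j S. j < m \<and> S \<in> M2 E} \<union>
      {insert {y, x} S | S. S \<in> BD E y}"
  proof cases
    case 1
    then have "H = S" unfolding S_def by blast
    then show ?thesis using S by simp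
  next
    case (2 a)
    then have H_eq: "H = insert a S" and a: "a \<notin> S" "a \<in> H" "a \<notin> E"
      unfolding S_def by blast+
    have "a \<in> E \<union> insert {y, x} {{x, l j} | j. j < m}"
      by (rule subsetD[OF H(1) a(2)])
    with a(3) have new: "a \<in> insert {y, x} {{x, l j} | j. j < m}"
      by (simp only: Un_iff) simp
    show ?thesis
    proof (cases "a = {y, x}")
      case True
      have "edge_degree S y + 1 \<le> 2"
        using deg[OF y_neq_x] edge_degree_insert[OF finite_S a(1), of y] True H_eq by simp
      then have "S \<in> BD E y"
        using S unfolding M2_def BD_def by auto
      then show ?thesis using H_eq True by blast
    next
      case False
      then show ?thesis using new H_eq S by blast
    qed
  qed
qed

lemma BD_add_end_vertex_supset:
  "M2 E \<union> {insert {x, l j} S | j S. j < m \<and> S \<in> M2 E} \<union> {insert {y, x} S | S. S \<in> BD E y}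
     \<subseteq> BD (E \<union> insert {y, x} {{x, l j} | j. j < m}) x"
proof
  fix H
  assume "H \<in> M2 E \<union> {insert {x, l j} S | j S. j < m \<and> S \<in> M2 E} \<union>
    {insert {y, x} S | S. S \<in> BD E y}"
  then consider "H \<in> M2 E" | j S where "H = insert {x, l j} S" "j < m" "S \<in> M2 E"
    | S where "H = insert {y, x} S" "S \<in> BD E y"
    by blast
  then show "H \<in> BD (E \<union> insert {y, x} {{x, l j} | j. j < m}) x"
  proof cases
    case 1
    then show ?thesis
      using edge_degree_fresh_end_vertex[of H] unfolding M2_def BD_def by auto
  next
    case (2 j S)
    then have S: "S \<subseteq> E" "finite S" "\<And>v. edge_degree S v \<le> 2" and new: "{x, l j} \<notin> S"
      using x_fresh unfolding M2_def by auto
    have "edge_degree S (l j) = 0"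
      using S(1) l_fresh[OF _ 2(2)] by (intro edge_degree_eq_0) blast
    then have "edge_degree H v \<le> 2" if "v \<noteq> x" for v
      using edge_degree_insert[OF S(2) new, of v] S(3)[of v] that 2(1) by auto
    moreover have "edge_degree H x \<le> 1"
      using edge_degree_insert[OF S(2) new, of x] edge_degree_fresh_end_vertex[OF S(1)] 2(1) by simp
    ultimately show ?thesis using S 2 unfolding BD_def by auto
  next
    case (3 S)
    then have S: "S \<subseteq> E" "finite S" "edge_degree S y \<le> 1" "\<And>v. v \<noteq> y \<Longrightarrow> edge_degree S v \<le> 2"
      and new: "{y, x} \<notin> S"
      using x_fresh unfolding BD_def by auto
    have "edge_degree H v \<le> 2" if "v \<noteq> x" for v
      using edge_degree_insert[OF S(2) new, of v] S(3) S(4)[of v] that 3(1) by (cases "v = y") auto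
    moreover have "edge_degree H x \<le> 1"
      using edge_degree_insert[OF S(2) new, of x] edge_degree_fresh_end_vertex[OF S(1)] 3(1) by simp
    ultimately show ?thesis using S 3 unfolding BD_def by auto
  qed
qed

lemma BD_add_end_vertex:
  "BD (E \<union> insert {y, x} {{x, l j} | j. j < m}) x =
     M2 E \<union> {insert {x, l j} S | j S. j < m \<and> S \<in> M2 E} \<union> {insert {y, x} S | S. S \<in> BD E y}"
  by (rule equalityI[OF BD_add_end_vertex_subset BD_add_end_vertex_supset])

end

lemma caterpillar_Suc:
  assumes "1 \<le> N"
  shows "caterpillar m (Suc N) =
    caterpillar m N \<union> insert {P N, P (Suc N)} {{P (Suc N), L (Suc N) j} | j. j < m}"
  using assms unfolding caterpillar_def by (auto simp: le_Suc_eq)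

lemma caterpillar_fresh:
  assumes "a \<in> caterpillar m N"
  shows "P (Suc N) \<notin> a" "L (Suc N) j \<notin> a"
  using assms unfolding caterpillar_def by auto

theorem mainTheorem16:
  fixes m n :: nat
  assumes "m \<ge> 2" and "n \<ge> 2"
  shows "geom (BD_cat m n) homotopy_equivalent_space
           wedge_space (geom (Sigma_m m (M2_cat m (n - 1)))) (vertex_point (Inr 0))
                       (geom (suspension (BD_cat m (n - 1)))) (vertex_point (Inr 0))"
proof -
  define N where "N = n - 1"
  have N: "1 \<le> N" and n: "n = Suc N" using assms(2) unfolding N_def by auto
  have fresh: "{P (Suc N), v} \<notin> S" "{v, P (Suc N)} \<notin> S" if "S \<in> M2 (caterpillar m N)" for v S
    using that caterpillar_fresh(1) unfolding M2_def by blast+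
  interpret cone_extension "M2_cat m N" "BD_cat m N" m
    "\<lambda>j. {P (Suc N), L (Suc N) j}" "{P N, P (Suc N)}"
    using assms(1) fresh simplicial_complex_M2 simplicial_complex_BD BD_subset_M2[THEN subsetD]
    unfolding M2_cat_def BD_cat_def by unfold_locales (auto simp: inj_on_def doubleton_eq_iff)
  have "BD_cat m n = K"
    unfolding K_def
    unfolding BD_cat_def M2_cat_def n caterpillar_Suc[OF N]
    by (rule BD_add_end_vertex) (auto dest: caterpillar_fresh)
  then show ?thesis
    using homotopy_equivalent_wedge unfolding N_def by simp
qed

end
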